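(* Let $(S,|\cdot|)$ be a finite metric space with $n\ge 3$ points, let $t\ge 1$ be a real number, and let $G'=(S,E')$ be a $t$-spanner for $S$ with $m$ edges. Let $G=(S,E)$ be the graph obtained from $G'$ by the construction described in the context with parameter $f=1$. Then $G$ is a $1$-faulty-degree $(3t)$-spanner for $S$ and has at most $3m$ edges.
   Context: For a finite metric space $(S,|\cdot|)$, $K_S$ denotes the complete graph on $S$ in which each edge $\{p,q\}$ has weight $|pq|$. All graphs on vertex set $S$ considered have edge weights $|pq|$. For an edge-weighted graph $X$ and vertices $p,q$, $\delta_X(p,q)$ is the length of a shortest path between $p$ and $q$ in $X$ ($+\infty$ if none exists). For a set $F$ of edges, $X\setminus F$ is the graph with the same vertex set as $X$ and edge set $E_X\setminus F$. A graph $G'=(S,E')$ is a $t$-spanner for $S$ if $\delta_{G'}(p,q)\le t|pq|$ for all $p,q\in S$. For an integer $f\ge 0$ and real $t\ge1$, a graph $G=(S,E)$ is an $f$-faulty-degree $t$-spanner for $S$ if for every subset $F\subseteq E$ such that the graph $(S,F)$ has maximum degree at most $f$, and for all $p,q\in S$, $\delta_{G\setminus F}(p,q)\le t\cdot\delta_{K_S\setminus F}(p,q)$. Construction: Let $G'=(S,E')$ be a $t$-spanner for $S$, $n=|S|$, and let $f$ be an integer with $1\le f\le (n-1)/2$. For each edge $\{a,b\}\in E'$, list the points of $S\setminus\{a,b\}$ as $c_1,\dots,c_{n-2}$ in non-decreasing order of $|ac_i|+|c_ib|$ (ties broken arbitrarily) and let $C_{ab}=\{c_1,\dots,c_{2f-1}\}$.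 The graph $G=(S,E)$ has edge set $E=E'\cup\{\{a,c\},\{c,b\}:\{a,b\}\in E',\ c\in C_{ab}\}$. *)

theory Defs
  imports "HOL-Library.Extended_Real"
begin

definition metric_on :: "'a set \<Rightarrow> ('a \<Rightarrow> 'a \<Rightarrow> real) \<Rightarrow> bool" where
  "metric_on S d \<longleftrightarrow>
     (\<forall>p\<in>S. \<forall>q\<in>S. d p q \<ge> 0 \<and> (d p q = 0 \<longleftrightarrow> p = q) \<and> d p q = d q p) \<and>
     (\<forall>p\<in>S. \<forall>q\<in>S. \<forall>r\<in>S. d p r \<le> d p q + d q r)"

definition complete_edges :: "'a set \<Rightarrow> 'a set set" where
  "complete_edges S = {{p, q} | p q. p \<in> S \<and> q \<in> S \<and> p \<noteq> q}"

definition is_walk :: "'a set set \<Rightarrow> 'a list \<Rightarrow> bool" where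
  "is_walk E xs \<longleftrightarrow> xs \<noteq> [] \<and> (\<forall>i < length xs - 1. {xs ! i, xs ! Suc i} \<in> E)"

definition walk_length :: "('a \<Rightarrow> 'a \<Rightarrow> real) \<Rightarrow> 'a list \<Rightarrow> real" where
  "walk_length d xs = (\<Sum>i < length xs - 1. d (xs ! i) (xs ! Suc i))"

text \<open>Shortest-path distance delta_X(p,q); +infinity if no path exists.\<close>
definition graph_dist :: "('a \<Rightarrow> 'a \<Rightarrow> real) \<Rightarrow> 'a set set \<Rightarrow> 'a \<Rightarrow> 'a \<Rightarrow> ereal" where
  "graph_dist d E p q =
     (INF xs \<in> {xs. is_walk E xs \<and> hd xs = p \<and> last xs = q}. ereal (walk_length d xs))"

definition is_spanner :: "'a set \<Rightarrow> ('a \<Rightarrow> 'a \<Rightarrow> real) \<Rightarrow> 'a set set \<Rightarrow> real \<Rightarrow> bool" where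
  "is_spanner S d E t \<longleftrightarrow> (\<forall>p\<in>S. \<forall>q\<in>S. graph_dist d E p q \<le> ereal (t * d p q))"

definition is_faulty_degree_spanner ::
  "'a set \<Rightarrow> ('a \<Rightarrow> 'a \<Rightarrow> real) \<Rightarrow> 'a set set \<Rightarrow> nat \<Rightarrow> real \<Rightarrow> bool" where
  "is_faulty_degree_spanner S d E f t \<longleftrightarrow>
     (\<forall>F. F \<subseteq> E \<and> (\<forall>v\<in>S. card {e \<in> F. v \<in> e} \<le> f) \<longrightarrow>
        (\<forall>p\<in>S. \<forall>q\<in>S. graph_dist d (E - F) p q \<le> ereal t * graph_dist d (complete_edges S - F) p q))"

text \<open>C assigns to each edge {a,b} of E' the set C_ab:
  the first 2f-1 points of S-{a,b} in some non-decreasing order of |ac|+|cb|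
  (ties broken arbitrarily), i.e. a (2f-1)-subset of S-{a,b} all of whose elements
  are no worse than every element outside it.\<close>
definition is_construction ::
  "'a set \<Rightarrow> ('a \<Rightarrow> 'a \<Rightarrow> real) \<Rightarrow> 'a set set \<Rightarrow> nat \<Rightarrow> ('a set \<Rightarrow> 'a set) \<Rightarrow> 'a set set \<Rightarrow> bool" where
  "is_construction S d E' f C E \<longleftrightarrow>
     (\<forall>a b. {a, b} \<in> E' \<longrightarrow>
        C {a, b} \<subseteq> S - {a, b} \<and> card (C {a, b}) = 2 * f - 1 \<and>
        (\<forall>c\<in>C {a, b}. \<forall>c'\<in>S - {a, b} - C {a, b}. d a c + d c b \<le> d a c' + d c' b)) \<and>
     E = E' \<union> {{a, c} | a b c. {a, b} \<in> E' \<and> c \<in> C {a, b}}"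

end

theory Submission
  imports Defs
begin

text \<open>A set F of faulty edges of maximum degree one is a matching. Given an edge xy of K_S
  outside F, follow a simple path P of G' from x to y of length at most t|xy|. A surviving edge
  ab of P is used as it is; a faulty one is replaced by the path a c b through c = C_ab, which
  survives because F is a matching and has length at most |aw| + |wb| for every other point w.
  Choosing w at the far end of an adjacent edge of P bounds this by |ab| plus twice the length
  of that edge. Faulty edges of P are never adjacent, so charging each of them to its
  predecessor (or, for the first edge of P, to its successor) charges every edge at most once, which
  gives length at most 3|P|; the only conflict, faulty first and third edges, is resolved by
  the detour point of the second edge. A stretch of 3t on the edges of K_S - F is then a
  stretch of 3t on all of its paths.\<close>

lemma is_walk_simps [simp]:
  "\<not> is_walk E []"
  "is_walk E [x]"
  "is_walk E (x # y # xs) \<longleftrightarrow> {x, y} \<in> E \<and> is_walk E (y # xs)"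
  by (auto simp: is_walk_def nth_Cons' less_Suc_eq_0_disj)

lemma walk_length_simps [simp]:
  "walk_length d [] = 0"
  "walk_length d [x] = 0"
  "walk_length d (x # y # xs) = d x y + walk_length d (y # xs)"
  by (simp_all add: walk_length_def sum.lessThan_Suc_shift del: sum.lessThan_Suc)

lemma is_walk_append_iff:
  "is_walk E (xs @ v # ys) \<longleftrightarrow> is_walk E (xs @ [v]) \<and> is_walk E (v # ys)"
  by (induction xs rule: induct_list012) auto

lemma walk_length_append:
  "walk_length d (xs @ v # ys) = walk_length d (xs @ [v]) + walk_length d (v # ys)"
  by (induction xs rule: induct_list012) auto

lemma walk_length_nonneg:
  assumes "is_walk E xs" and "\<And>x y. {x, y} \<in> E \<Longrightarrow> 0 \<le> d x y"
  shows "0 \<le> walk_length d xs"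
  using assms by (induction xs rule: induct_list012) auto

definition reachable_within :: "('a \<Rightarrow> 'a \<Rightarrow> real) \<Rightarrow> 'a set set \<Rightarrow> 'a \<Rightarrow> 'a \<Rightarrow> real \<Rightarrow> bool" where
  "reachable_within d E p q L \<longleftrightarrow>
     (\<exists>ws. is_walk E ws \<and> hd ws = p \<and> last ws = q \<and> walk_length d ws \<le> L)"

lemma reachable_within_refl: "0 \<le> L \<Longrightarrow> reachable_within d E p p L"
  unfolding reachable_within_def by (rule exI[of _ "[p]"]) simp

lemma reachable_within_edge: "{p, q} \<in> E \<Longrightarrow> d p q \<le> L \<Longrightarrow> reachable_within d E p q L"
  unfolding reachable_within_def by (rule exI[of _ "[p, q]"]) simp

lemma reachable_within_mono: "reachable_within d E p q L \<Longrightarrow> L \<le> L' \<Longrightarrow> reachable_within d E p q L'"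
  unfolding reachable_within_def by force

lemma reachable_within_trans:
  assumes "reachable_within d E p q L" and "reachable_within d E q r L'"
  shows "reachable_within d E p r (L + L')"
proof -
  obtain xs where xs: "is_walk E xs" "hd xs = p" "last xs = q" "walk_length d xs \<le> L"
    using assms(1) unfolding reachable_within_def by blast
  obtain ys where ys: "is_walk E ys" "hd ys = q" "last ys = r" "walk_length d ys \<le> L'"
    using assms(2) unfolding reachable_within_def by blast
  obtain xs' where xs': "xs = xs' @ [q]"
    using xs(1,3) by (metis append_butlast_last_id is_walk_simps(1))
  obtain ys' where ys': "ys = q # ys'"
    using ys(1,2) by (metis is_walk_simps(1) list.collapse)
  have "is_walk E (xs' @ q # ys')"
    using xs(1) ys(1) is_walk_append_iff[of E xs' q ys'] unfolding xs' ys' by blast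
  moreover have "walk_length d (xs' @ q # ys') \<le> L + L'"
    using xs(4) ys(4) walk_length_append[of d xs' q ys'] unfolding xs' ys' by simp
  moreover have "hd (xs' @ q # ys') = p"
    using xs(2) unfolding xs' by (cases xs') simp_all
  moreover have "last (xs' @ q # ys') = r"
    using ys(3) unfolding ys' by simp
  ultimately show ?thesis
    unfolding reachable_within_def by blast
qed

lemma graph_dist_le_if_reachable_within:
  "reachable_within d E p q L \<Longrightarrow> graph_dist d E p q \<le> ereal L"
  unfolding reachable_within_def graph_dist_def by (auto intro!: INF_lower2)

lemma reachable_within_if_graph_dist_less:
  "graph_dist d E p q < ereal L \<Longrightarrow> reachable_within d E p q L"
  unfolding reachable_within_def graph_dist_def INF_less_iff by force

lemma walk_shortcut_distinct:
  assumes "is_walk E ws" and "\<And>x y. {x, y} \<in> E \<Longrightarrow> 0 \<le> d x y"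
  shows "\<exists>ws'. is_walk E ws' \<and> distinct ws' \<and> hd ws' = hd ws \<and> last ws' = last ws \<and>
           walk_length d ws' \<le> walk_length d ws"
  using assms(1)
proof (induction "length ws" arbitrary: ws rule: less_induct)
  case less
  show ?case
  proof (cases "distinct ws")
    case False
    then obtain xs y ys zs where ws: "ws = xs @ [y] @ ys @ [y] @ zs"
      using not_distinct_decomp by blast
    have "is_walk E (xs @ [y])" and loop: "is_walk E ((y # ys) @ [y])" and "is_walk E (y # zs)"
      using less.prems is_walk_append_iff[of E xs y "ys @ y # zs"]
        is_walk_append_iff[of E "y # ys" y zs] unfolding ws by auto
    then have short: "is_walk E (xs @ y # zs)"
      using is_walk_append_iff[of E xs y zs] by blast
    have "walk_length d ws = walk_length d (xs @ y # zs) + walk_length d ((y # ys) @ [y])"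
      unfolding ws using walk_length_append[of d xs y "ys @ y # zs"]
        walk_length_append[of d "y # ys" y zs] walk_length_append[of d xs y zs] by simp
    moreover have "0 \<le> walk_length d ((y # ys) @ [y])"
      using walk_length_nonneg[OF loop assms(2)] .
    moreover have "hd (xs @ y # zs) = hd ws" and "last (xs @ y # zs) = last ws"
      unfolding ws by (cases xs; simp) (cases zs; simp)
    moreover have "length (xs @ y # zs) < length ws"
      unfolding ws by simp
    ultimately show ?thesis
      using less.hyps[OF _ short] by fastforce
  qed (use less.prems in blast)
qed

lemma graph_dist_le_stretch:
  assumes "0 < c" and edge: "\<And>x y. {x, y} \<in> K \<Longrightarrow> graph_dist d H x y \<le> ereal (c * d x y)"
  shows "graph_dist d H p q \<le> ereal c * graph_dist d K p q"
proof -
  have reach_walk: "reachable_within d H (hd ws) (last ws) (c * walk_length d ws + length ws * \<epsilon>)"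
    if "is_walk K ws" and "0 < \<epsilon>" for ws and \<epsilon> :: real
    using that(1)
  proof (induction ws rule: induct_list012)
    case (2 x)
    show ?case using \<open>0 < \<epsilon>\<close> by (simp add: reachable_within_refl)
  next
    case (3 x y zs)
    have "graph_dist d H x y < ereal (c * d x y + \<epsilon>)"
      using edge[of x y] "3.prems" \<open>0 < \<epsilon>\<close> by (auto intro: le_less_trans)
    then have "reachable_within d H x y (c * d x y + \<epsilon>)"
      by (rule reachable_within_if_graph_dist_less)
    moreover have "reachable_within d H y (last (y # zs))
        (c * walk_length d (y # zs) + length (y # zs) * \<epsilon>)"
      using "3.IH"(2) "3.prems" by simp
    ultimately have "reachable_within d H x (last (y # zs))
        ((c * d x y + \<epsilon>) + (c * walk_length d (y # zs) + length (y # zs) * \<epsilon>))"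
      by (rule reachable_within_trans)
    then show ?case
      by (simp add: algebra_simps)
  qed simp
  have walk_bound: "graph_dist d H p q \<le> ereal (c * walk_length d ws)"
    if "is_walk K ws" "hd ws = p" "last ws = q" for ws
  proof (rule ereal_le_epsilon2)
    fix e :: real
    assume "0 < e"
    have n: "0 < real (length ws)" using that(1) by (cases ws) auto
    have "reachable_within d H p q (c * walk_length d ws + length ws * (e / length ws))"
      using reach_walk[OF that(1), of "e / length ws"] that n \<open>0 < e\<close> by simp
    then have "graph_dist d H p q \<le> ereal (c * walk_length d ws + e)"
      using n by (simp add: graph_dist_le_if_reachable_within)
    then show "graph_dist d H p q \<le> ereal (c * walk_length d ws) + ereal e"
      by simp
  qed
  have "ereal (1 / c) * graph_dist d H p q \<le> graph_dist d K p q"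
    unfolding graph_dist_def[of d K]
  proof (rule INF_greatest)
    fix ws
    assume "ws \<in> {xs. is_walk K xs \<and> hd xs = p \<and> last xs = q}"
    then have "ereal (1 / c) * graph_dist d H p q \<le> ereal (1 / c) * ereal (c * walk_length d ws)"
      using walk_bound \<open>0 < c\<close> by (intro ereal_mult_left_mono) auto
    also have "\<dots> = ereal (walk_length d ws)"
      using \<open>0 < c\<close> by simp
    finally show "ereal (1 / c) * graph_dist d H p q \<le> ereal (walk_length d ws)" .
  qed
  then have "ereal c * (ereal (1 / c) * graph_dist d H p q) \<le> ereal c * graph_dist d K p q"
    using \<open>0 < c\<close> by (intro ereal_mult_left_mono) auto
  then show ?thesis
    using \<open>0 < c\<close> by (simp add: mult.assoc[symmetric])
qed

locale construction_with_faults =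
  fixes S :: "'a set" and d :: "'a \<Rightarrow> 'a \<Rightarrow> real" and E' E F :: "'a set set"
    and C :: "'a set \<Rightarrow> 'a set"
  assumes finite_S: "finite S" and metric: "metric_on S d"
    and E'_complete: "E' \<subseteq> complete_edges S"
    and construction: "is_construction S d E' 1 C E"
    and faults: "F \<subseteq> E" and fault_degree: "\<forall>v\<in>S. card {e \<in> F. v \<in> e} \<le> 1"
begin

lemma d_commute: "x \<in> S \<Longrightarrow> y \<in> S \<Longrightarrow> d x y = d y x"
  and d_nonneg: "x \<in> S \<Longrightarrow> y \<in> S \<Longrightarrow> 0 \<le> d x y"
  and d_triangle: "x \<in> S \<Longrightarrow> y \<in> S \<Longrightarrow> z \<in> S \<Longrightarrow> d x z \<le> d x y + d y z"
  using metric unfolding metric_on_def by blast+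

lemma E'_edge_vertices: "{x, y} \<in> E' \<Longrightarrow> x \<in> S \<and> y \<in> S \<and> x \<noteq> y"
  using E'_complete unfolding complete_edges_def by (auto simp: doubleton_eq_iff)

lemma E_eq: "E = E' \<union> {{a, c} | a b c. {a, b} \<in> E' \<and> c \<in> C {a, b}}"
  using construction unfolding is_construction_def by blast

lemma construction_choice:
  assumes "{a, b} \<in> E'"
  shows "C {a, b} \<subseteq> S - {a, b}" and "card (C {a, b}) = 1"
    and "\<And>c w. c \<in> C {a, b} \<Longrightarrow> w \<in> S - {a, b} - C {a, b} \<Longrightarrow> d a c + d c b \<le> d a w + d w b"
  using construction assms unfolding is_construction_def by simp_all

definition center :: "'a \<Rightarrow> 'a \<Rightarrow> 'a" where
  "center a b = the_elem (C {a, b})"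

lemma C_eq_center:
  assumes "{a, b} \<in> E'"
  shows "C {a, b} = {center a b}"
proof -
  obtain c where "C {a, b} = {c}"
    using construction_choice(2)[OF assms] by (rule card_1_singletonE)
  then show ?thesis
    unfolding center_def by simp
qed

lemma center_mem:
  assumes "{a, b} \<in> E'"
  shows "center a b \<in> S - {a, b}"
  using construction_choice(1)[OF assms] C_eq_center[OF assms] by blast

lemma center_minimal:
  assumes "{a, b} \<in> E'" and "w \<in> S - {a, b}"
  shows "d a (center a b) + d (center a b) b \<le> d a w + d w b"
proof (cases "w = center a b")
  case False
  then show ?thesis
    using construction_choice(3)[OF assms(1)] assms(2) C_eq_center[OF assms(1)] by simp
qed simp

lemma center_edges:
  assumes "{a, b} \<in> E'"
  shows "{a, center a b} \<in> E" and "{center a b, b} \<in> E"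
proof -
  have "{b, a} \<in> E'" and "center a b \<in> C {b, a}" and "center a b \<in> C {a, b}"
    using assms C_eq_center[OF assms] by (simp_all add: insert_commute)
  then have "{a, center a b} \<in> E" and "{b, center a b} \<in> E"
    using assms unfolding E_eq by blast+
  then show "{a, center a b} \<in> E" and "{center a b, b} \<in> E"
    by (simp_all add: insert_commute)
qed

lemma E_subset_Pow: "E \<subseteq> Pow S"
proof
  fix e
  assume "e \<in> E"
  then consider "e \<in> E'" | a b c where "e = {a, c}" "{a, b} \<in> E'" "c \<in> C {a, b}"
    unfolding E_eq by blast
  then show "e \<in> Pow S"
  proof cases
    case 1
    then show ?thesis using E'_complete unfolding complete_edges_def by blast
  next
    case (2 a b c)
    then show ?thesis using E'_edge_vertices construction_choice(1) by blast
  qed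
qed

lemma faulty_edge_unique:
  assumes "v \<in> S" and "{v, a} \<in> F" and "{v, b} \<in> F"
  shows "a = b"
proof -
  have "finite F"
    using faults E_subset_Pow finite_S by (meson finite_Pow_iff finite_subset)
  moreover have "card {e \<in> F. v \<in> e} \<le> 1"
    using fault_degree assms(1) by blast
  ultimately have "{v, a} = {v, b}"
    using assms(2,3) by (auto simp: card_le_Suc0_iff_eq)
  then show ?thesis
    by (auto simp: doubleton_eq_iff)
qed

lemma free_edge_reachable:
  "{a, b} \<in> E' \<Longrightarrow> {a, b} \<notin> F \<Longrightarrow> reachable_within d (E - F) a b (d a b)"
  using E_eq by (intro reachable_within_edge) auto

lemma faulty_edge_detour:
  assumes "{a, b} \<in> E'" and "{a, b} \<in> F" and w: "w \<in> S - {a, b}"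
  shows "reachable_within d (E - F) a b (d a w + d w b)"
proof -
  have a: "a \<in> S" and b: "b \<in> S"
    using E'_edge_vertices assms(1) by auto
  have c: "center a b \<in> S - {a, b}"
    using center_mem assms(1) .
  have "{a, center a b} \<notin> F"
    using faulty_edge_unique[OF a _ assms(2)] c by blast
  moreover have "{center a b, b} \<notin> F"
    using faulty_edge_unique[OF b, of "center a b" a] assms(2) c by (auto simp: insert_commute)
  ultimately have "reachable_within d (E - F) a b (d a (center a b) + d (center a b) b)"
    using center_edges[OF assms(1)] by (blast intro: reachable_within_trans reachable_within_edge)
  then show ?thesis
    using center_minimal[OF assms(1) w] by (rule reachable_within_mono)
qed

lemma E'_edge_reachable_surcharge:
  assumes ab: "{a, b} \<in> E'" and w: "w \<in> S - {a, b}"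
  shows "reachable_within d (E - F) a b (d a b + 2 * d a w)"
    and "reachable_within d (E - F) a b (d a b + 2 * d w b)"
proof -
  have reach: "reachable_within d (E - F) a b L" if "d a b \<le> L" and "d a w + d w b \<le> L" for L
  proof (cases "{a, b} \<in> F")
    case True
    show ?thesis using faulty_edge_detour[OF ab True w] that(2) by (rule reachable_within_mono)
  next
    case False
    show ?thesis using free_edge_reachable[OF ab False] that(1) by (rule reachable_within_mono)
  qed
  have a: "a \<in> S" and b: "b \<in> S" and "w \<in> S"
    using E'_edge_vertices ab w by auto
  then have "d w b \<le> d a w + d a b" and "d a w \<le> d a b + d w b"
    using d_triangle d_commute by (metis add.commute)+
  moreover have "0 \<le> d a w" and "0 \<le> d w b"
    using a b \<open>w \<in> S\<close> d_nonneg by auto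
  ultimately show "reachable_within d (E - F) a b (d a b + 2 * d a w)"
    and "reachable_within d (E - F) a b (d a b + 2 * d w b)"
    by (auto intro!: reach)
qed

lemma walk_tail_reachable:
  assumes "is_walk E' (u # v # rest)" and "distinct (u # v # rest)"
  shows "reachable_within d (E - F) v (last (v # rest)) (2 * d u v + 3 * walk_length d (v # rest))"
  using assms
proof (induction rest arbitrary: u v)
  case Nil
  then have "0 \<le> d u v"
    using E'_edge_vertices d_nonneg by auto
  then show ?case
    by (simp add: reachable_within_refl)
next
  case (Cons w rest)
  have uv: "{u, v} \<in> E'" and vw: "{v, w} \<in> E'"
    using Cons.prems(1) by auto
  then have "u \<in> S - {v, w}" and "d v u = d u v"
    using E'_edge_vertices Cons.prems(2) d_commute by auto
  then have "reachable_within d (E - F) v w (d v w + 2 * d u v)"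
    using E'_edge_reachable_surcharge(1)[OF vw] by metis
  moreover have "reachable_within d (E - F) w (last (w # rest)) (2 * d v w + 3 * walk_length d (w # rest))"
    using Cons.IH[of v w] Cons.prems by simp
  ultimately have "reachable_within d (E - F) v (last (w # rest))
      ((d v w + 2 * d u v) + (2 * d v w + 3 * walk_length d (w # rest)))"
    by (rule reachable_within_trans)
  then show ?case
    by (simp add: algebra_simps)
qed

lemma walk_reachable_if_first_edge_free:
  assumes "is_walk E' (v # rest)" and "distinct (v # rest)" and "rest \<noteq> [] \<Longrightarrow> {v, hd rest} \<notin> F"
  shows "reachable_within d (E - F) v (last (v # rest)) (3 * walk_length d (v # rest))"
proof (cases rest)
  case Nil
  then show ?thesis by (simp add: reachable_within_refl)
next
  case (Cons w rest')
  then have "reachable_within d (E - F) v w (d v w)"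
    using assms free_edge_reachable by simp
  moreover have "reachable_within d (E - F) w (last (w # rest')) (2 * d v w + 3 * walk_length d (w # rest'))"
    using walk_tail_reachable assms Cons by blast
  ultimately have "reachable_within d (E - F) v (last (w # rest'))
      (d v w + (2 * d v w + 3 * walk_length d (w # rest')))"
    by (rule reachable_within_trans)
  then show ?thesis
    using Cons by (simp add: algebra_simps)
qed

lemma alternating_faults_reachable:
  assumes walk: "is_walk E' [x, v1, v2, v3]" and dist: "distinct [x, v1, v2, v3]"
    and F1: "{x, v1} \<in> F" and F3: "{v2, v3} \<in> F"
  shows "reachable_within d (E - F) x v3 (3 * walk_length d [x, v1, v2, v3])"
proof -
  \<comment> \<open>The free middle edge cannot pay for both faulty edges; instead its center, being no
      worse a detour point than x or v3, serves as the detour point of both faulty edges.\<close>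
  have e1: "{x, v1} \<in> E'" and e2: "{v1, v2} \<in> E'" and e3: "{v2, v3} \<in> E'"
    using walk by auto
  then have S: "x \<in> S" "v1 \<in> S" "v2 \<in> S" "v3 \<in> S"
    using E'_edge_vertices by auto
  have F2: "{v1, v2} \<notin> F"
    using faulty_edge_unique[of v1 x v2] S F1 dist by (auto simp: insert_commute)
  define c where "c = center v1 v2"
  have c: "c \<in> S - {v1, v2}"
    unfolding c_def using center_mem[OF e2] .
  have "d x v2 + d v2 v1 + d v1 v3 \<le> 3 * walk_length d [x, v1, v2, v3]"
    using d_triangle[of x v1 v2] d_triangle[of v1 v2 v3] d_commute[of v1 v2] S
      d_nonneg[of x v1] d_nonneg[of v1 v2] d_nonneg[of v2 v3] by simp
  consider "c = x" | "c = v3" | "c \<notin> {x, v3}"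
    by blast
  then show ?thesis
  proof cases
    case 1
    then have "{x, v2} \<in> E - F"
      using center_edges(2)[OF e2] faulty_edge_unique[of x v1 v2] S F1 dist unfolding c_def by auto
    then have "reachable_within d (E - F) x v2 (d x v2)"
      by (rule reachable_within_edge) simp
    moreover have "reachable_within d (E - F) v2 v3 (d v2 v1 + d v1 v3)"
      using faulty_edge_detour[OF e3 F3] S dist by auto
    ultimately have "reachable_within d (E - F) x v3 (d x v2 + (d v2 v1 + d v1 v3))"
      by (rule reachable_within_trans)
    then show ?thesis
      using \<open>d x v2 + d v2 v1 + d v1 v3 \<le> _\<close> by (auto intro: reachable_within_mono)
  next
    case 2
    then have "{v1, v3} \<in> E - F"
      using center_edges(1)[OF e2] faulty_edge_unique[of v1 x v3] S F1 dist unfolding c_def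
      by (auto simp: insert_commute)
    have "reachable_within d (E - F) x v1 (d x v2 + d v2 v1)"
      using faulty_edge_detour[OF e1 F1] S dist by auto
    moreover have "reachable_within d (E - F) v1 v3 (d v1 v3)"
      using \<open>{v1, v3} \<in> E - F\<close> by (rule reachable_within_edge) simp
    ultimately have "reachable_within d (E - F) x v3 (d x v2 + d v2 v1 + d v1 v3)"
      by (rule reachable_within_trans)
    then show ?thesis
      using \<open>d x v2 + d v2 v1 + d v1 v3 \<le> _\<close> by (rule reachable_within_mono)
  next
    case 3
    have "reachable_within d (E - F) x v1 (d x c + d c v1)"
      using faulty_edge_detour[OF e1 F1] c 3 by auto
    moreover have "reachable_within d (E - F) v2 v3 (d v2 c + d c v3)"
      using faulty_edge_detour[OF e3 F3] c 3 by auto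
    ultimately have "reachable_within d (E - F) x v3 (d x c + d c v1 + d v1 v2 + (d v2 c + d c v3))"
      using free_edge_reachable[OF e2 F2] by (blast intro: reachable_within_trans)
    moreover have "d v1 c + d c v2 \<le> d v1 x + d x v2" and "d v1 c + d c v2 \<le> d v1 v3 + d v3 v2"
      using center_minimal[OF e2, of x] center_minimal[OF e2, of v3] S dist unfolding c_def by auto
    then have "d x c + d c v1 + d v1 v2 + (d v2 c + d c v3) \<le> 3 * walk_length d [x, v1, v2, v3]"
      using d_triangle[of x v1 c] d_triangle[of c v2 v3] d_triangle[of x v1 v2] d_triangle[of v1 v2 v3]
        d_commute[of v1 x] d_commute[of v3 v2] d_commute[of c v1] d_commute[of v2 c] S c
      by simp
    ultimately show ?thesis
      by (rule reachable_within_mono)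
  qed
qed

lemma distinct_walk_reachable:
  assumes walk: "is_walk E' ws" and dist: "distinct ws" and ends: "{hd ws, last ws} \<notin> F"
  shows "reachable_within d (E - F) (hd ws) (last ws) (3 * walk_length d ws)"
proof -
  obtain x rest where ws: "ws = x # rest"
    using walk by (cases ws) auto
  show ?thesis
  proof (cases "rest \<noteq> [] \<longrightarrow> {x, hd rest} \<notin> F")
    case True
    then show ?thesis
      using walk_reachable_if_first_edge_free walk dist unfolding ws by simp
  next
    case False
    then obtain v1 r where rest: "rest = v1 # r" and F1: "{x, v1} \<in> F"
      by (cases rest) auto
    obtain v2 r2 where r: "r = v2 # r2"
      using ends F1 unfolding ws rest by (cases r) auto
    have e1: "{x, v1} \<in> E'" and e2: "{v1, v2} \<in> E'"
      using walk unfolding ws rest r by auto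
    then have S: "x \<in> S" "v1 \<in> S" "v2 \<in> S"
      using E'_edge_vertices by auto
    have dist': "x \<noteq> v2"
      using dist unfolding ws rest r by auto
    show ?thesis
    proof (cases "r2 \<noteq> [] \<longrightarrow> {v2, hd r2} \<notin> F")
      case True
      have "{v1, v2} \<notin> F"
        using faulty_edge_unique[of v1 x v2] S F1 dist' by (auto simp: insert_commute)
      moreover have "reachable_within d (E - F) x v1 (d x v1 + 2 * d v2 v1)"
        using E'_edge_reachable_surcharge(2)[OF e1, of v2] E'_edge_vertices[OF e2] S dist' by simp
      moreover have "reachable_within d (E - F) v2 (last (v2 # r2)) (3 * walk_length d (v2 # r2))"
        using walk_reachable_if_first_edge_free[of v2 r2] True walk dist unfolding ws rest r by simp
      ultimately have "reachable_within d (E - F) x (last (v2 # r2))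
          ((d x v1 + 2 * d v2 v1) + d v1 v2 + 3 * walk_length d (v2 # r2))"
        using free_edge_reachable[OF e2] reachable_within_trans by metis
      moreover have "(d x v1 + 2 * d v2 v1) + d v1 v2 + 3 * walk_length d (v2 # r2) \<le> 3 * walk_length d ws"
        using d_nonneg[of x v1] d_commute[of v1 v2] S unfolding ws rest r by simp
      ultimately show ?thesis
        unfolding ws rest r by (auto intro: reachable_within_mono)
    next
      case False
      then obtain v3 r3 where r2: "r2 = v3 # r3" and F3: "{v2, v3} \<in> F"
        by (cases r2) auto
      have "v3 \<in> S"
        using walk E'_edge_vertices unfolding ws rest r r2 by auto
      then have "r3 \<noteq> [] \<longrightarrow> {v3, hd r3} \<notin> F"
        using faulty_edge_unique[of v3 v2 "hd r3"] F3 dist unfolding ws rest r r2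
        by (cases r3) (auto simp: insert_commute)
      then have suffix: "reachable_within d (E - F) v3 (last (v3 # r3)) (3 * walk_length d (v3 # r3))"
        using walk_reachable_if_first_edge_free[of v3 r3] walk dist unfolding ws rest r r2 by simp
      have prefix: "reachable_within d (E - F) x v3 (3 * walk_length d [x, v1, v2, v3])"
        using alternating_faults_reachable[OF _ _ F1 F3] walk dist unfolding ws rest r r2 by simp
      have "reachable_within d (E - F) x (last (v3 # r3))
          (3 * walk_length d [x, v1, v2, v3] + 3 * walk_length d (v3 # r3))"
        using reachable_within_trans[OF prefix suffix] .
      then show ?thesis
        unfolding ws rest r r2 by (simp add: algebra_simps)
    qed
  qed
qed

lemma fault_free_edge_stretch:
  assumes spanner: "is_spanner S d E' t" and xy: "{x, y} \<in> complete_edges S - F"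
  shows "graph_dist d (E - F) x y \<le> ereal (3 * t * d x y)"
proof (rule ereal_le_epsilon2)
  fix e :: real
  assume "0 < e"
  have "x \<in> S" and "y \<in> S"
    using xy unfolding complete_edges_def by (auto simp: doubleton_eq_iff)
  then have "graph_dist d E' x y \<le> ereal (t * d x y)"
    using spanner unfolding is_spanner_def by blast
  also have "\<dots> < ereal (t * d x y + e / 3)"
    using \<open>0 < e\<close> by simp
  finally have "reachable_within d E' x y (t * d x y + e / 3)"
    by (rule reachable_within_if_graph_dist_less)
  then obtain ws where ws: "is_walk E' ws" "hd ws = x" "last ws = y"
      "walk_length d ws \<le> t * d x y + e / 3"
    unfolding reachable_within_def by blast
  have nonneg: "\<And>a b. {a, b} \<in> E' \<Longrightarrow> 0 \<le> d a b"
    using E'_edge_vertices d_nonneg by blast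
  obtain ws' where ws': "is_walk E' ws'" "distinct ws'" "hd ws' = x" "last ws' = y"
      "walk_length d ws' \<le> walk_length d ws"
    using walk_shortcut_distinct[where d = d, OF ws(1) nonneg] ws(2,3) by blast
  then have "reachable_within d (E - F) x y (3 * walk_length d ws')"
    using distinct_walk_reachable[OF ws'(1,2)] xy by simp
  then have "graph_dist d (E - F) x y \<le> ereal (3 * walk_length d ws')"
    by (rule graph_dist_le_if_reachable_within)
  also have "\<dots> \<le> ereal (3 * t * d x y + e)"
    using ws(4) ws'(5) by simp
  finally show "graph_dist d (E - F) x y \<le> ereal (3 * t * d x y) + ereal e"
    by simp
qed

end

lemma card_construction_le:
  assumes "finite S" and "E' \<subseteq> complete_edges S" and "is_construction S d E' f C E"
  shows "card E \<le> (1 + 2 * (2 * f - 1)) * card E'"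
proof -
  define X where "X = {{a, c} | a b c. {a, b} \<in> E' \<and> c \<in> C {a, b}}"
  define U where "U = (\<Union>e\<in>E'. (\<lambda>(a, c). {a, c}) ` (e \<times> C e))"
  have E: "E = E' \<union> X"
    using assms(3) unfolding is_construction_def X_def by blast
  have "complete_edges S \<subseteq> Pow S"
    unfolding complete_edges_def by auto
  then have "finite E'"
    using assms(1,2) by (meson finite_Pow_iff finite_subset subset_trans)
  have card_pairs: "finite (e \<times> C e) \<and> card (e \<times> C e) = 2 * (2 * f - 1)" if e: "e \<in> E'" for e
  proof -
    obtain a b where "e = {a, b}" "a \<noteq> b" "a \<in> S" "b \<in> S"
      using e assms(2) unfolding complete_edges_def by blast
    moreover have "C {a, b} \<subseteq> S - {a, b} \<and> card (C {a, b}) = 2 * f - 1"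
      using assms(3) \<open>e = {a, b}\<close> e unfolding is_construction_def by simp
    ultimately show ?thesis
      using assms(1) finite_subset by (auto simp: card_cartesian_product)
  qed
  have "X \<subseteq> U"
  proof
    fix x
    assume "x \<in> X"
    then obtain a b c where "x = {a, c}" "{a, b} \<in> E'" "c \<in> C {a, b}"
      unfolding X_def by blast
    then have "(a, c) \<in> {a, b} \<times> C {a, b}" and "x = (\<lambda>(a, c). {a, c}) (a, c)"
      by simp_all
    then show "x \<in> U"
      unfolding U_def using \<open>{a, b} \<in> E'\<close> by blast
  qed
  moreover have "finite U"
    unfolding U_def using \<open>finite E'\<close> card_pairs by blast
  moreover have "card U \<le> (\<Sum>e\<in>E'. card ((\<lambda>(a, c). {a, c}) ` (e \<times> C e)))"
    unfolding U_def by (rule card_UN_le[OF \<open>finite E'\<close>])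
  moreover have "\<dots> \<le> (\<Sum>e\<in>E'. 2 * (2 * f - 1))"
    using card_pairs by (intro sum_mono) (metis card_image_le)
  ultimately have "card X \<le> 2 * (2 * f - 1) * card E'"
    using card_mono[of U X] by (simp add: mult.commute)
  then show ?thesis
    unfolding E using card_Un_le[of E' X] by (simp add: algebra_simps)
qed

theorem theorem1:
  fixes S :: "'a set" and d :: "'a \<Rightarrow> 'a \<Rightarrow> real" and t :: real
    and E' E :: "'a set set" and C :: "'a set \<Rightarrow> 'a set"
  assumes "finite S" and "metric_on S d" and "card S \<ge> 3" and "t \<ge> 1"
    and "E' \<subseteq> complete_edges S" and "is_spanner S d E' t"
    and "is_construction S d E' 1 C E"
  shows "is_faulty_degree_spanner S d E 1 (3 * t) \<and> card E \<le> 3 * card E'"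
proof
  show "is_faulty_degree_spanner S d E 1 (3 * t)"
    unfolding is_faulty_degree_spanner_def
  proof (intro allI impI ballI)
    fix F p q
    assume "F \<subseteq> E \<and> (\<forall>v\<in>S. card {e \<in> F. v \<in> e} \<le> 1)"
    then interpret construction_with_faults S d E' E F C
      using assms by unfold_locales auto
    show "graph_dist d (E - F) p q \<le> ereal (3 * t) * graph_dist d (complete_edges S - F) p q"
      by (rule graph_dist_le_stretch) (use assms(4,6) fault_free_edge_stretch in auto)
  qed
  show "card E \<le> 3 * card E'"
    using card_construction_le[OF assms(1,5,7)] by simp
qed

end
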